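(* For every $x\in\mathbb{C}^n$, the element $(\mathrm{J}(0,n),x)\in\mathfrak{aff}(n,\mathbb{C})$ is strongly adjoint $c$-real.
   Context: $\mathrm{J}(\lambda,m)$ denotes the $m\times m$ Jordan block with $\lambda$ on the diagonal, $1$ on the superdiagonal and $0$ elsewhere. $\mathrm{Aff}(n,\mathbb{C})$ is the group of pairs $(A,v)$, $A\in\mathrm{GL}(n,\mathbb{C})$, $v\in\mathbb{C}^n$, identified with the matrices $\begin{pmatrix}A&v\\0&1\end{pmatrix}\in\mathrm{GL}(n+1,\mathbb{C})$ (so $(A,v)(B,w)=(AB,Aw+v)$, identity $(I_n,0)$). Its Lie algebra $\mathfrak{aff}(n,\mathbb{C})$ consists of pairs $(X,u)$, $X\in M_n(\mathbb{C})$, $u\in\mathbb{C}^n$, identified with $\begin{pmatrix}X&u\\0&0\end{pmatrix}$. The adjoint action is matrix conjugation: $\mathrm{Ad}_{(A,v)}(X,u)=(AXA^{-1},\,Au-AXA^{-1}v)$. Complex conjugation acts entrywise. An element $Y\in\mathfrak{aff}(n,\mathbb{C})$ is strongly adjoint $c$-real if there exists $h\in\mathrm{Aff}(n,\mathbb{C})$ with $h\overline{h}=(I_n,0)$ and $\mathrm{Ad}_h(Y)=-\overline{Y}$. *)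

theory Defs
  imports "Jordan_Normal_Form.Jordan_Normal_Form" "Jordan_Normal_Form.Gauss_Jordan_Elimination"
begin

type_synonym aff_pair = "complex mat \<times> complex vec"

definition Aff :: "nat \<Rightarrow> aff_pair set" where
  "Aff n = {(A, v). A \<in> carrier_mat n n \<and> invertible_mat A \<and> v \<in> carrier_vec n}"

definition aff_lie :: "nat \<Rightarrow> aff_pair set" where
  "aff_lie n = {(X, u). X \<in> carrier_mat n n \<and> u \<in> carrier_vec n}"

definition aff_mult :: "aff_pair \<Rightarrow> aff_pair \<Rightarrow> aff_pair" where
  "aff_mult h g = (case h of (A, v) \<Rightarrow> case g of (B, w) \<Rightarrow> (A * B, A *\<^sub>v w + v))"

definition aff_one :: "nat \<Rightarrow> aff_pair" where
  "aff_one n = (1\<^sub>m n, 0\<^sub>v n)"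

definition mat_inv :: "complex mat \<Rightarrow> complex mat" where
  "mat_inv A = the (mat_inverse A)"

definition Ad :: "aff_pair \<Rightarrow> aff_pair \<Rightarrow> aff_pair" where
  "Ad h Y = (case h of (A, v) \<Rightarrow> case Y of (X, u) \<Rightarrow>
      (A * X * mat_inv A, A *\<^sub>v u - (A * X * mat_inv A) *\<^sub>v v))"

definition aff_cnj :: "aff_pair \<Rightarrow> aff_pair" where
  "aff_cnj h = (case h of (A, v) \<Rightarrow> (map_mat cnj A, map_vec cnj v))"

definition aff_neg :: "aff_pair \<Rightarrow> aff_pair" where
  "aff_neg Y = (case Y of (X, u) \<Rightarrow> (- X, - u))"

definition strongly_adjoint_c_real :: "nat \<Rightarrow> aff_pair \<Rightarrow> bool" where
  "strongly_adjoint_c_real n Y \<longleftrightarrow>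
     (\<exists>h \<in> Aff n. aff_mult h (aff_cnj h) = aff_one n \<and> Ad h Y = aff_neg (aff_cnj Y))"

end

theory Submission
  imports Defs
begin

text \<open>Let \<open>D\<close> be diagonal with unimodular entries \<open>d\<^sub>i\<close> of alternating sign,
  \<open>d\<^sub>i\<^sub>+\<^sub>1 = - d\<^sub>i\<close>. Then \<open>D conj(D) = 1\<close> and conjugation by \<open>D\<close> turns \<open>J(0,n)\<close>
  into \<open>-J(0,n)\<close>, so \<open>h = (D, v)\<close> works as soon as \<open>D conj(v) + v = 0\<close> and
  \<open>D x + J v = - conj(x)\<close>. Taking \<open>v\<^sub>0 = 0\<close>, the first \<open>n - 1\<close> coordinates of the second
  equation determine \<open>v\<close>, and the first equation then follows from \<open>d\<^sub>i\<^sub>+\<^sub>1 = - d\<^sub>i\<close>.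
  The last coordinate, \<open>d\<^sub>n\<^sub>-\<^sub>1 x\<^sub>n\<^sub>-\<^sub>1 = - conj(x\<^sub>n\<^sub>-\<^sub>1)\<close>, is met by choosing the common
  unimodular factor of the \<open>d\<^sub>i\<close>.\<close>

lemma mat_inv_eqI:
  fixes A B :: "complex mat"
  assumes A: "A \<in> carrier_mat n n" and B: "B \<in> carrier_mat n n"
    and AB: "A * B = 1\<^sub>m n" and BA: "B * A = 1\<^sub>m n"
  shows "mat_inv A = B"
proof (cases "mat_inverse A")
  case None
  have "A \<in> Units (ring_mat TYPE(complex) n n)"
    using A B AB BA by (auto simp: Units_def ring_mat_def)
  with mat_inverse(1)[OF A None, of n] show ?thesis by blast
next
  case (Some C)
  with mat_inverse(2)[OF A] have AC: "A * C = 1\<^sub>m n" and C: "C \<in> carrier_mat n n" by auto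
  have "C = (B * A) * C" using BA C by simp
  also have "\<dots> = B * (A * C)" using A B C by (simp add: assoc_mult_mat[of _ n n _ n _ n])
  also have "\<dots> = B" using AC B by simp
  finally show ?thesis using Some by (simp add: mat_inv_def)
qed

lemma map_mat_cnj_mat_diag: "map_mat cnj (mat_diag n f) = mat_diag n (\<lambda>i. cnj (f i))"
  by (rule eq_matI) (auto simp: mat_diag_def)

lemma
  fixes f :: "nat \<Rightarrow> complex"
  assumes "\<And>i. f i \<noteq> 0"
  shows invertible_mat_diag: "invertible_mat (mat_diag n f)"
    and mat_inv_mat_diag: "mat_inv (mat_diag n f) = mat_diag n (\<lambda>i. inverse (f i))"
proof -
  let ?D = "mat_diag n (\<lambda>i. inverse (f i))"
  have DD: "mat_diag n f * ?D = 1\<^sub>m n" "?D * mat_diag n f = 1\<^sub>m n"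
    using assms by simp_all
  then show "invertible_mat (mat_diag n f)"
    unfolding invertible_mat_def inverts_mat_def
    by (intro conjI exI[of _ ?D]) (simp_all add: carrier_matD[OF mat_diag_dim])
  from DD show "mat_inv (mat_diag n f) = ?D"
    by (intro mat_inv_eqI) auto
qed

lemma mat_diag_mult_vec:
  fixes f :: "nat \<Rightarrow> 'a :: semiring_0"
  assumes "w \<in> carrier_vec n"
  shows "mat_diag n f *\<^sub>v w = vec n (\<lambda>i. f i * w $ i)"
  using assms
  by (intro eq_vecI)
    (auto simp: mat_diag_def scalar_prod_def if_distrib[of "\<lambda>t. t * _"] cong: if_cong)

lemma map_mat_cnj_jordan_block: "map_mat cnj (jordan_block n a) = jordan_block n (cnj a)"
  by (rule eq_matI) auto

lemma mat_diag_alternating_conj_jordan_block: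
  fixes d :: "nat \<Rightarrow> 'a :: field"
  assumes alt: "\<And>i. d (Suc i) = - d i" and nz: "\<And>i. d i \<noteq> 0"
  shows "mat_diag n d * jordan_block n a * mat_diag n (\<lambda>i. inverse (d i)) = - jordan_block n (- a)"
  by (subst mat_diag_mult_left[of _ _ n], force, subst mat_diag_mult_right[of _ n],
      insert alt nz, auto simp: jordan_block_def field_simps intro!: eq_matI)

lemma jordan_block_mult_vec_index:
  fixes w :: "'a :: comm_ring_1 vec"
  assumes "w \<in> carrier_vec n" and "i < n"
  shows "(jordan_block n a *\<^sub>v w) $ i = a * w $ i + (if Suc i < n then w $ Suc i else 0)"
proof -
  have "(jordan_block n a *\<^sub>v w) $ i =
      (\<Sum>k\<in>{0..<n}. (if k = i then a * w $ k else 0) + (if k = Suc i then w $ k else 0))"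
    using assms by (auto simp: scalar_prod_def intro!: sum.cong)
  then show ?thesis
    using assms by (simp add: sum.distrib)
qed

lemma exists_unimodular_mult_eq_neg_cnj: "\<exists>c. c * cnj c = 1 \<and> c * z = - cnj z"
proof (cases "z = 0")
  case False
  then have "cnj z \<noteq> 0" by simp
  with False show ?thesis
    by (intro exI[of _ "- cnj z / z"]) (simp add: field_simps)
qed (auto intro: exI[of _ 1])

lemma exists_alternating_unimodular:
  fixes z :: complex
  shows "\<exists>d. (\<forall>i. d (Suc i) = - d i) \<and> (\<forall>i. d i * cnj (d i) = 1) \<and> d m * z = - cnj z"
proof -
  obtain c where c: "c * cnj c = 1" "c * z = - cnj z"
    using exists_unimodular_mult_eq_neg_cnj by blast
  define d where "d i = c * (-1) ^ m * (-1) ^ i" for i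
  have "d m = c"
    by (simp add: d_def mult.assoc flip: power_mult_distrib)
  with c show ?thesis
    by (intro exI[of _ d]) (simp add: d_def algebra_simps flip: power_add)
qed

lemma strongly_adjoint_c_realI:
  assumes X: "X \<in> carrier_mat n n" and A: "A \<in> carrier_mat n n" "invertible_mat A"
    and v: "v \<in> carrier_vec n"
    and AA: "A * map_mat cnj A = 1\<^sub>m n" and Av: "A *\<^sub>v map_vec cnj v + v = 0\<^sub>v n"
    and AX: "A * X * mat_inv A = - map_mat cnj X"
    and Au: "A *\<^sub>v u + map_mat cnj X *\<^sub>v v = - map_vec cnj u"
  shows "strongly_adjoint_c_real n (X, u)"
  unfolding strongly_adjoint_c_real_def
proof (rule bexI[of _ "(A, v)"])
  have "A *\<^sub>v u - (- map_mat cnj X) *\<^sub>v v = A *\<^sub>v u + map_mat cnj X *\<^sub>v v"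
    using X v by (intro eq_vecI) auto
  with AA Av AX Au
  show "aff_mult (A, v) (aff_cnj (A, v)) = aff_one n \<and> Ad (A, v) (X, u) = aff_neg (aff_cnj (X, u))"
    by (simp add: aff_mult_def aff_cnj_def aff_one_def Ad_def aff_neg_def)
qed (use A v in \<open>simp add: Aff_def\<close>)

definition jordan_translation :: "(nat \<Rightarrow> complex) \<Rightarrow> complex vec \<Rightarrow> complex vec" where
  "jordan_translation d x =
     vec (dim_vec x) (\<lambda>i. if i = 0 then 0 else - cnj (x $ (i - 1)) - d (i - 1) * x $ (i - 1))"

lemma dim_jordan_translation[simp]: "dim_vec (jordan_translation d x) = dim_vec x"
  by (simp add: jordan_translation_def)

lemma jordan_translation_carrier[simp]:
  "x \<in> carrier_vec n \<Longrightarrow> jordan_translation d x \<in> carrier_vec n"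
  by (auto simp: jordan_translation_def)

lemma jordan_translation_involutive:
  assumes alt: "\<And>i. d (Suc i) = - d i" and unit: "\<And>i. d i * cnj (d i) = 1"
    and x: "x \<in> carrier_vec n"
  shows "mat_diag n d *\<^sub>v map_vec cnj (jordan_translation d x) + jordan_translation d x = 0\<^sub>v n"
proof (rule eq_vecI)
  fix i assume "i < dim_vec (0\<^sub>v n :: complex vec)"
  then have i: "i < n" by simp
  have "d i * cnj (jordan_translation d x $ i) + jordan_translation d x $ i = 0"
  proof (cases i)
    case (Suc k)
    have "d i * cnj (jordan_translation d x $ i) + jordan_translation d x $ i
        = (d k * cnj (d k) - 1) * cnj (x $ k)"
      using i x Suc alt by (simp add: jordan_translation_def algebra_simps)
    with unit show ?thesis by simp
  qed (use i x in \<open>simp add: jordan_translation_def\<close>)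
  with i x show "(mat_diag n d *\<^sub>v map_vec cnj (jordan_translation d x) + jordan_translation d x) $ i
      = 0\<^sub>v n $ i"
    by (simp add: mat_diag_mult_vec)
qed (use x in \<open>simp add: jordan_translation_def\<close>)

lemma jordan_translation_solves:
  assumes x: "x \<in> carrier_vec n" and last: "d (n - 1) * x $ (n - 1) = - cnj (x $ (n - 1))"
  shows "mat_diag n d *\<^sub>v x + jordan_block n 0 *\<^sub>v jordan_translation d x = - map_vec cnj x"
proof (rule eq_vecI)
  fix i assume "i < dim_vec (- map_vec cnj x)"
  then have i: "i < n" using x by simp
  have "d i * x $ i + (if Suc i < n then jordan_translation d x $ Suc i else 0) = - cnj (x $ i)"
  proof (cases "Suc i < n")
    case False
    with i have "i = n - 1" by simp
    with last show ?thesis by simp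
  qed (use x in \<open>simp add: jordan_translation_def\<close>)
  with i x show "(mat_diag n d *\<^sub>v x + jordan_block n 0 *\<^sub>v jordan_translation d x) $ i
      = (- map_vec cnj x) $ i"
    by (simp add: mat_diag_mult_vec jordan_block_mult_vec_index del: index_mult_mat_vec)
qed (use x in simp)

theorem lemma3p4:
  fixes n :: nat and x :: "complex vec"
  assumes "x \<in> carrier_vec n"
  shows "strongly_adjoint_c_real n (jordan_block n (0::complex), x)"
proof -
  obtain d where alt: "\<And>i. d (Suc i) = - d i" and unit: "\<And>i. d i * cnj (d i) = 1"
    and last: "d (n - 1) * x $ (n - 1) = - cnj (x $ (n - 1))"
    using exists_alternating_unimodular by blast
  from unit have nz: "d i \<noteq> 0" for i
    by (metis mult_zero_left zero_neq_one)
  show ?thesis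
  proof (rule strongly_adjoint_c_realI[where A = "mat_diag n d" and v = "jordan_translation d x"])
    show "mat_diag n d * map_mat cnj (mat_diag n d) = 1\<^sub>m n"
      using unit by (simp add: map_mat_cnj_mat_diag)
    show "mat_diag n d *\<^sub>v map_vec cnj (jordan_translation d x) + jordan_translation d x = 0\<^sub>v n"
      using alt unit assms by (rule jordan_translation_involutive)
    show "mat_diag n d * jordan_block n 0 * mat_inv (mat_diag n d) = - map_mat cnj (jordan_block n 0)"
      using mat_diag_alternating_conj_jordan_block[of d, OF alt nz]
      by (simp add: mat_inv_mat_diag nz map_mat_cnj_jordan_block)
    show "mat_diag n d *\<^sub>v x + map_mat cnj (jordan_block n 0) *\<^sub>v jordan_translation d x
        = - map_vec cnj x"
      using jordan_translation_solves[of x n d, OF assms last] by (simp add: map_mat_cnj_jordan_block)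
  qed (use assms in \<open>simp_all add: invertible_mat_diag nz\<close>)
qed

end
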